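(* Let $Y$ be a solid vector space and $(X,d)$ a cone metric space over $Y$. Then convergence in $X$ has the following properties: (i) any convergent sequence has a unique limit; (ii) any subsequence of a convergent sequence converges to the same limit; (iii) any convergent sequence is bounded, i.e. its set of terms is contained in some closed ball; (iv) the convergence and the limit of a sequence do not depend on finitely many of its terms.
   Context: Vector space with convergence: a real vector space $Y$ with a relation $\to$ between sequences in $Y$ and points of $Y$ (uniqueness of limits not assumed) such that (C1) $x_n\to x$, $y_n\to y$ imply $x_n+y_n\to x+y$; (C2) $x_n\to x$, $\lambda\in\mathbb R$ imply $\lambda x_n\to\lambda x$; (C3) $\lambda_n\to\lambda$ in $\mathbb R$ imply $\lambda_n x\to\lambda x$. $A\subseteq Y$ is open if $x_n\to x\in A$ implies $x_n\in A$ for all but finitely many $n$; closed if $x_n\to x$, $x_n\in A$ $\forall n$ imply $x\in A$; $A^\circ$ is the union of all open subsets of $A$. A cone is a nonempty closed $K$ with $\lambda K\subseteq K$ ($\lambda\ge0$), $K+K\subseteq K$, $K\cap(-K)=\{0\}$; solid if $K\ne\{0\}$, $K^\circ\ne\emptyset$. A vector ordering is a partial order $\preceq$ with (V1) $x\preceq y\Rightarrow x+z\preceq y+z$; (V2) $\lambda\ge0$, $x\preceq y\Rightarrow\lambda x\preceq\lambda y$; (V3) $x_n\to x$, $y_n\to y$, $x_n\preceq y_n$ $\forall n\Rightarrow x\preceq y$. Solid vector space: positive cone $K=\{x:x\succeq0\}$ solid, with $x\prec y$ iff $y-x\in K^\circ$. Cone metric space over $Y$: nonempty $X$ with $d\colon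 X\times X\to Y$, $d(x,y)\succeq0$, $d(x,y)=0$ iff $x=y$, $d(x,y)=d(y,x)$, $d(x,y)\preceq d(x,z)+d(z,y)$. Convergence in $X$ is with respect to the topology with basis the open balls $U(x,r)=\{y:d(y,x)\prec r\}$ ($r\succ0$): $x_n\to x$ iff for every $c\succ0$, $d(x_n,x)\prec c$ for all but finitely many $n$. Closed ball $\overline U(x,r)=\{y:d(y,x)\preceq r\}$, $r\succeq0$. *)

theory Defs
  imports "HOL-Analysis.Analysis"
begin

text \<open>A vector space with convergence: a real vector space 'y together with a
  relation conv between sequences and points (limits need not be unique).\<close>

definition vs_conv :: "((nat \<Rightarrow> 'y::real_vector) \<Rightarrow> 'y \<Rightarrow> bool) \<Rightarrow> bool" where
  "vs_conv conv \<longleftrightarrow>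
     (\<forall>xs x ys y. conv xs x \<and> conv ys y \<longrightarrow> conv (\<lambda>n. xs n + ys n) (x + y)) \<and>
     (\<forall>xs x (c::real). conv xs x \<longrightarrow> conv (\<lambda>n. c *\<^sub>R xs n) (c *\<^sub>R x)) \<and>
     (\<forall>(ls::nat \<Rightarrow> real) l x. ls \<longlonglongrightarrow> l \<longrightarrow> conv (\<lambda>n. ls n *\<^sub>R x) (l *\<^sub>R x))"

definition conv_open :: "((nat \<Rightarrow> 'y) \<Rightarrow> 'y \<Rightarrow> bool) \<Rightarrow> 'y set \<Rightarrow> bool" where
  "conv_open conv A \<longleftrightarrow>
     (\<forall>xs x. conv xs x \<and> x \<in> A \<longrightarrow> (\<forall>\<^sub>F n in sequentially. xs n \<in> A))"

definition conv_closed :: "((nat \<Rightarrow> 'y) \<Rightarrow> 'y \<Rightarrow> bool) \<Rightarrow> 'y set \<Rightarrow> bool" where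
  "conv_closed conv A \<longleftrightarrow> (\<forall>xs x. conv xs x \<and> (\<forall>n. xs n \<in> A) \<longrightarrow> x \<in> A)"

definition conv_interior :: "((nat \<Rightarrow> 'y) \<Rightarrow> 'y \<Rightarrow> bool) \<Rightarrow> 'y set \<Rightarrow> 'y set" where
  "conv_interior conv A = \<Union>{U. U \<subseteq> A \<and> conv_open conv U}"

definition is_cone :: "((nat \<Rightarrow> 'y::real_vector) \<Rightarrow> 'y \<Rightarrow> bool) \<Rightarrow> 'y set \<Rightarrow> bool" where
  "is_cone conv K \<longleftrightarrow> K \<noteq> {} \<and> conv_closed conv K \<and>
     (\<forall>(c::real) x. c \<ge> 0 \<and> x \<in> K \<longrightarrow> c *\<^sub>R x \<in> K) \<and>
     (\<forall>x y. x \<in> K \<and> y \<in> K \<longrightarrow> x + y \<in> K) \<and>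
     K \<inter> uminus ` K = {0}"

definition solid_cone :: "((nat \<Rightarrow> 'y::real_vector) \<Rightarrow> 'y \<Rightarrow> bool) \<Rightarrow> 'y set \<Rightarrow> bool" where
  "solid_cone conv K \<longleftrightarrow> is_cone conv K \<and> K \<noteq> {0} \<and> conv_interior conv K \<noteq> {}"

definition vector_ordering ::
  "((nat \<Rightarrow> 'y::real_vector) \<Rightarrow> 'y \<Rightarrow> bool) \<Rightarrow> ('y \<Rightarrow> 'y \<Rightarrow> bool) \<Rightarrow> bool" where
  "vector_ordering conv le \<longleftrightarrow>
     (\<forall>x. le x x) \<and> (\<forall>x y. le x y \<and> le y x \<longrightarrow> x = y) \<and>
     (\<forall>x y z. le x y \<and> le y z \<longrightarrow> le x z) \<and>
     (\<forall>x y z. le x y \<longrightarrow> le (x + z) (y + z)) \<and>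
     (\<forall>(c::real) x y. c \<ge> 0 \<and> le x y \<longrightarrow> le (c *\<^sub>R x) (c *\<^sub>R y)) \<and>
     (\<forall>xs x ys y. conv xs x \<and> conv ys y \<and> (\<forall>n. le (xs n) (ys n)) \<longrightarrow> le x y)"

definition solid_vector_space ::
  "((nat \<Rightarrow> 'y::real_vector) \<Rightarrow> 'y \<Rightarrow> bool) \<Rightarrow> ('y \<Rightarrow> 'y \<Rightarrow> bool) \<Rightarrow> bool" where
  "solid_vector_space conv le \<longleftrightarrow> vs_conv conv \<and> vector_ordering conv le \<and>
     solid_cone conv {x. le 0 x}"

definition slt ::
  "((nat \<Rightarrow> 'y::real_vector) \<Rightarrow> 'y \<Rightarrow> bool) \<Rightarrow> ('y \<Rightarrow> 'y \<Rightarrow> bool) \<Rightarrow> 'y \<Rightarrow> 'y \<Rightarrow> bool" where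
  "slt conv le x y \<longleftrightarrow> y - x \<in> conv_interior conv {z. le 0 z}"

definition cone_metric :: "('y::real_vector \<Rightarrow> 'y \<Rightarrow> bool) \<Rightarrow> ('x \<Rightarrow> 'x \<Rightarrow> 'y) \<Rightarrow> bool" where
  "cone_metric le d \<longleftrightarrow>
     (\<forall>x y. le 0 (d x y)) \<and> (\<forall>x y. d x y = 0 \<longleftrightarrow> x = y) \<and>
     (\<forall>x y. d x y = d y x) \<and> (\<forall>x y z. le (d x y) (d x z + d z y))"

definition cm_conv ::
  "((nat \<Rightarrow> 'y::real_vector) \<Rightarrow> 'y \<Rightarrow> bool) \<Rightarrow> ('y \<Rightarrow> 'y \<Rightarrow> bool) \<Rightarrow> ('x \<Rightarrow> 'x \<Rightarrow> 'y)
     \<Rightarrow> (nat \<Rightarrow> 'x) \<Rightarrow> 'x \<Rightarrow> bool" where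
  "cm_conv conv le d xs x \<longleftrightarrow>
     (\<forall>c. slt conv le 0 c \<longrightarrow> (\<forall>\<^sub>F n in sequentially. slt conv le (d (xs n) x) c))"

definition cm_cball :: "('y \<Rightarrow> 'y \<Rightarrow> bool) \<Rightarrow> ('x \<Rightarrow> 'x \<Rightarrow> 'y) \<Rightarrow> 'x \<Rightarrow> 'y \<Rightarrow> 'x set" where
  "cm_cball le d a r = {y. le (d y a) r}"

end

theory Submission
  imports Defs
begin

text \<open>Uniqueness: if a sequence converges to both a and b, then for every c \<succ> 0 the
  triangle inequality through a far term gives d(a,b) \<prec> c/2 + c/2, and a positive
  element below every c \<succ> 0 vanishes, because c/(n+1) \<rightarrow> 0 (axiom C3) and \<preceq> is closed
  under limits (axiom V3). Boundedness: all terms from some N on lie within a fixed c \<succ> 0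
  of the limit, and the finitely many earlier distances are absorbed by adding their sum.
  The statements about subsequences and finitely many terms only use that convergence is
  an eventual property.\<close>

no_notation lesspoll (infixl "\<prec>" 50)

lemma cm_conv_cong_eventually:
  assumes "\<forall>\<^sub>F n in sequentially. xs n = ys n"
  shows "cm_conv conv le d xs a \<longleftrightarrow> cm_conv conv le d ys a"
proof -
  have "(\<forall>\<^sub>F n in sequentially. slt conv le (d (xs n) a) c) \<longleftrightarrow>
        (\<forall>\<^sub>F n in sequentially. slt conv le (d (ys n) a) c)" for c
    using assms by (intro eventually_subst) (auto elim: eventually_mono)
  then show ?thesis unfolding cm_conv_def by simp
qed

lemma cm_conv_finite_diff:
  assumes "finite {n. xs n \<noteq> ys n}"
  shows "cm_conv conv le d xs a \<longleftrightarrow> cm_conv conv le d ys a"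
proof (rule cm_conv_cong_eventually)
  show "\<forall>\<^sub>F n in sequentially. xs n = ys n"
    using assms by (simp add: eventually_cofinite flip: cofinite_eq_sequentially)
qed

lemma cm_conv_subseq:
  assumes "cm_conv conv le d xs a" and "strict_mono g"
  shows "cm_conv conv le d (xs \<circ> g) a"
  unfolding cm_conv_def
proof (intro allI impI)
  fix c assume "slt conv le 0 c"
  then have "\<forall>\<^sub>F n in sequentially. slt conv le (d (xs n) a) c"
    using assms(1) unfolding cm_conv_def by blast
  from eventually_compose_filterlim[OF this filterlim_subseq[OF assms(2)]]
  show "\<forall>\<^sub>F n in sequentially. slt conv le (d ((xs \<circ> g) n) a) c" by simp
qed

lemma vs_conv_add: "vs_conv conv \<Longrightarrow> conv xs x \<Longrightarrow> conv ys y \<Longrightarrow> conv (\<lambda>n. xs n + ys n) (x + y)"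
  and vs_conv_scaleR: "vs_conv conv \<Longrightarrow> conv xs x \<Longrightarrow> conv (\<lambda>n. c *\<^sub>R xs n) (c *\<^sub>R x)"
  and vs_conv_scaleR_left: "vs_conv conv \<Longrightarrow> ls \<longlonglongrightarrow> l \<Longrightarrow> conv (\<lambda>n. ls n *\<^sub>R x) (l *\<^sub>R x)"
  unfolding vs_conv_def by blast+

lemma vs_conv_const: "vs_conv conv \<Longrightarrow> conv (\<lambda>n. x) x"
  using vs_conv_scaleR_left[of conv "\<lambda>n. 1" 1 x] by simp

lemma conv_open_translation:
  assumes "vs_conv conv" and "conv_open conv U"
  shows "conv_open conv ((\<lambda>x. x + k) ` U)"
  unfolding conv_open_def
proof (intro allI impI)
  fix xs x assume "conv xs x \<and> x \<in> (\<lambda>x. x + k) ` U"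
  then obtain y where xs: "conv xs x" and y: "y \<in> U" "x = y + k" by auto
  have "conv (\<lambda>n. xs n + - k) y"
    using vs_conv_add[OF assms(1) xs vs_conv_const[OF assms(1), of "- k"]] y(2) by simp
  then have "\<forall>\<^sub>F n in sequentially. xs n + - k \<in> U"
    using assms(2) y(1) unfolding conv_open_def by blast
  then show "\<forall>\<^sub>F n in sequentially. xs n \<in> (\<lambda>x. x + k) ` U"
    by (rule eventually_mono) (erule rev_image_eqI, simp)
qed

lemma conv_open_scaleR:
  assumes "vs_conv conv" and "conv_open conv U" and "c \<noteq> 0"
  shows "conv_open conv ((\<lambda>x. c *\<^sub>R x) ` U)"
  unfolding conv_open_def
proof (intro allI impI)
  fix xs x assume "conv xs x \<and> x \<in> (\<lambda>x. c *\<^sub>R x) ` U"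
  then obtain y where xs: "conv xs x" and y: "y \<in> U" "x = c *\<^sub>R y" by auto
  have "conv (\<lambda>n. inverse c *\<^sub>R xs n) y"
    using vs_conv_scaleR[OF assms(1) xs, of "inverse c"] y(2) assms(3) by simp
  then have "\<forall>\<^sub>F n in sequentially. inverse c *\<^sub>R xs n \<in> U"
    using assms(2) y(1) unfolding conv_open_def by blast
  then show "\<forall>\<^sub>F n in sequentially. xs n \<in> (\<lambda>x. c *\<^sub>R x) ` U"
    by (rule eventually_mono) (erule rev_image_eqI, simp add: assms(3))
qed

lemma conv_interior_subset: "conv_interior conv A \<subseteq> A"
  unfolding conv_interior_def by auto

lemma conv_interior_iff:
  "u \<in> conv_interior conv A \<longleftrightarrow> (\<exists>U. U \<subseteq> A \<and> conv_open conv U \<and> u \<in> U)"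
  unfolding conv_interior_def by auto

locale ordered_conv_space =
  fixes conv :: "(nat \<Rightarrow> 'y::real_vector) \<Rightarrow> 'y \<Rightarrow> bool"
    and le :: "'y \<Rightarrow> 'y \<Rightarrow> bool"  (infix "\<preceq>" 50)
  assumes vector_ordering: "vector_ordering conv le"
begin

lemma refl: "x \<preceq> x"
  and antisym: "x \<preceq> y \<Longrightarrow> y \<preceq> x \<Longrightarrow> x = y"
  and trans: "x \<preceq> y \<Longrightarrow> y \<preceq> z \<Longrightarrow> x \<preceq> z"
  and add_right_mono: "x \<preceq> y \<Longrightarrow> x + z \<preceq> y + z"
  and scaleR_mono: "c \<ge> 0 \<Longrightarrow> x \<preceq> y \<Longrightarrow> c *\<^sub>R x \<preceq> c *\<^sub>R y"
  and le_limit: "conv xs x \<Longrightarrow> conv ys y \<Longrightarrow> (\<And>n. xs n \<preceq> ys n) \<Longrightarrow> x \<preceq> y"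
  using vector_ordering unfolding vector_ordering_def by blast+

lemma le_iff_diff_nonneg: "x \<preceq> y \<longleftrightarrow> 0 \<preceq> y - x"
proof
  assume "x \<preceq> y"
  then show "0 \<preceq> y - x" using add_right_mono[of x y "- x"] by simp
next
  assume "0 \<preceq> y - x"
  then show "x \<preceq> y" using add_right_mono[of 0 "y - x" x] by simp
qed

lemma le_add_nonneg:
  assumes "x \<preceq> y" and "0 \<preceq> z"
  shows "x \<preceq> y + z"
proof -
  have "y \<preceq> y + z"
    using add_right_mono[OF assms(2), of y] by (simp add: add.commute)
  with assms(1) show ?thesis by (rule trans)
qed

lemma sum_nonneg: "(\<And>i. i \<in> S \<Longrightarrow> 0 \<preceq> f i) \<Longrightarrow> 0 \<preceq> sum f S"
proof (induction S rule: infinite_finite_induct)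
  case (insert i S)
  then show ?case by (simp add: le_add_nonneg)
qed (simp_all add: refl)

lemma member_le_sum:
  assumes "finite S" "i \<in> S" "\<And>j. j \<in> S \<Longrightarrow> 0 \<preceq> f j"
  shows "f i \<preceq> sum f S"
  using assms le_add_nonneg[OF refl sum_nonneg[of "S - {i}" f]] by (simp add: sum.remove)

end

locale solid_space = ordered_conv_space +
  assumes vs_conv: "vs_conv conv"
    and solid: "solid_cone conv {x. 0 \<preceq> x}"
begin

abbreviation less (infix "\<prec>" 50) where "x \<prec> y \<equiv> slt conv le x y"

lemma ex_positive: "\<exists>c. 0 \<prec> c"
  using solid[unfolded solid_cone_def, THEN conjunct2, THEN conjunct2]
  unfolding slt_def by auto

lemma less_imp_le: "x \<prec> y \<Longrightarrow> x \<preceq> y"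
  unfolding slt_def le_iff_diff_nonneg[of x y] using conv_interior_subset by fast

lemma interior_add_nonneg:
  assumes "u \<in> conv_interior conv {z. 0 \<preceq> z}" and "0 \<preceq> k"
  shows "u + k \<in> conv_interior conv {z. 0 \<preceq> z}"
proof -
  obtain U where U: "U \<subseteq> {z. 0 \<preceq> z}" "conv_open conv U" "u \<in> U"
    using assms(1) unfolding conv_interior_iff by blast
  have "(\<lambda>x. x + k) ` U \<subseteq> {z. 0 \<preceq> z}"
  proof
    fix v assume "v \<in> (\<lambda>x. x + k) ` U"
    then obtain x where "x \<in> U" "v = x + k" by blast
    then show "v \<in> {z. 0 \<preceq> z}" using U(1) le_add_nonneg[OF _ assms(2)] by blast
  qed
  moreover have "conv_open conv ((\<lambda>x. x + k) ` U)"
    by (rule conv_open_translation[OF vs_conv U(2)])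
  moreover have "u + k \<in> (\<lambda>x. x + k) ` U"
    using U(3) by (rule imageI)
  ultimately show ?thesis unfolding conv_interior_iff by blast
qed

lemma interior_scaleR:
  assumes "u \<in> conv_interior conv {z. 0 \<preceq> z}" and "c > 0"
  shows "c *\<^sub>R u \<in> conv_interior conv {z. 0 \<preceq> z}"
proof -
  obtain U where U: "U \<subseteq> {z. 0 \<preceq> z}" "conv_open conv U" "u \<in> U"
    using assms(1) unfolding conv_interior_iff by blast
  have "(\<lambda>x. c *\<^sub>R x) ` U \<subseteq> {z. 0 \<preceq> z}"
  proof
    fix v assume "v \<in> (\<lambda>x. c *\<^sub>R x) ` U"
    then obtain x where "x \<in> U" "v = c *\<^sub>R x" by blast
    then show "v \<in> {z. 0 \<preceq> z}"
      using U(1) scaleR_mono[of c 0 x] assms(2) by auto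
  qed
  moreover have "conv_open conv ((\<lambda>x. c *\<^sub>R x) ` U)"
    using assms(2) by (intro conv_open_scaleR[OF vs_conv U(2)]) simp
  moreover have "c *\<^sub>R u \<in> (\<lambda>x. c *\<^sub>R x) ` U"
    using U(3) by (rule imageI)
  ultimately show ?thesis unfolding conv_interior_iff by blast
qed

lemma le_less_trans:
  assumes "x \<preceq> y" and "y \<prec> z"
  shows "x \<prec> z"
proof -
  have "(z - y) + (y - x) \<in> conv_interior conv {z. 0 \<preceq> z}"
    using assms interior_add_nonneg unfolding slt_def le_iff_diff_nonneg[of x y] by blast
  then show ?thesis unfolding slt_def by (simp add: algebra_simps)
qed

lemma add_strict_mono:
  assumes "x \<prec> u" and "y \<prec> v"
  shows "x + y \<prec> u + v"
proof -
  have "0 \<preceq> v - y"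
    using less_imp_le[OF assms(2)] unfolding le_iff_diff_nonneg[of y v] .
  then have "(u - x) + (v - y) \<in> conv_interior conv {z. 0 \<preceq> z}"
    using assms(1) interior_add_nonneg unfolding slt_def by blast
  then show ?thesis unfolding slt_def by (simp add: algebra_simps)
qed

lemma scaleR_pos: "0 \<prec> c \<Longrightarrow> r > 0 \<Longrightarrow> 0 \<prec> r *\<^sub>R c"
  using interior_scaleR unfolding slt_def by simp

lemma half_pos: "0 \<prec> c \<Longrightarrow> 0 \<prec> (1/2) *\<^sub>R c"
  by (simp add: scaleR_pos)

lemma le_zero_if_le_all_pos:
  assumes "\<And>c. 0 \<prec> c \<Longrightarrow> a \<preceq> c"
  shows "a \<preceq> 0"
proof -
  obtain c where c: "0 \<prec> c" using ex_positive by blast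
  have "conv (\<lambda>n. (1 / (real n + 1)) *\<^sub>R c) (0 *\<^sub>R c)"
    using vs_conv_scaleR_left[OF vs_conv LIMSEQ_inverse_real_of_nat]
    by (simp add: inverse_eq_divide add.commute)
  moreover have "a \<preceq> (1 / (real n + 1)) *\<^sub>R c" for n
    by (rule assms) (simp add: c scaleR_pos)
  ultimately have "a \<preceq> 0 *\<^sub>R c"
    by (rule le_limit[OF vs_conv_const[OF vs_conv]])
  then show ?thesis by simp
qed

end

locale cone_metric_space = solid_space conv le
  for conv :: "(nat \<Rightarrow> 'y::real_vector) \<Rightarrow> 'y \<Rightarrow> bool" and le (infix "\<preceq>" 50) +
  fixes d :: "'x \<Rightarrow> 'x \<Rightarrow> 'y"
  assumes cone_metric: "cone_metric le d"
begin

lemma dist_nonneg: "0 \<preceq> d x y"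
  and dist_eq_0_iff: "d x y = 0 \<longleftrightarrow> x = y"
  and dist_commute: "d x y = d y x"
  and dist_triangle: "d x y \<preceq> d x z + d z y"
  using cone_metric unfolding cone_metric_def by blast+

lemma cm_conv_unique:
  assumes "cm_conv conv le d xs a" and "cm_conv conv le d xs b"
  shows "a = b"
proof -
  have "d a b \<preceq> c" if c: "0 \<prec> c" for c
  proof -
    let ?h = "(1/2) *\<^sub>R c"
    have "\<forall>\<^sub>F n in sequentially. d (xs n) a \<prec> ?h"
      and "\<forall>\<^sub>F n in sequentially. d (xs n) b \<prec> ?h"
      using assms half_pos[OF c] unfolding cm_conv_def by blast+
    then have "\<forall>\<^sub>F n in sequentially. d (xs n) a \<prec> ?h \<and> d (xs n) b \<prec> ?h"
      by (rule eventually_conj)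
    then obtain n where "d a (xs n) \<prec> ?h" and "d (xs n) b \<prec> ?h"
      unfolding eventually_sequentially dist_commute[of _ a] by blast
    then have "d a (xs n) + d (xs n) b \<prec> ?h + ?h"
      by (rule add_strict_mono)
    moreover have "?h + ?h = c"
      by (simp flip: scaleR_add_left)
    ultimately have "d a b \<prec> c"
      using le_less_trans[OF dist_triangle] by simp
    then show ?thesis by (rule less_imp_le)
  qed
  then have "d a b = 0"
    by (rule antisym[OF le_zero_if_le_all_pos dist_nonneg])
  then show ?thesis using dist_eq_0_iff by blast
qed

lemma cm_conv_bounded:
  assumes "cm_conv conv le d xs a"
  shows "\<exists>r. 0 \<preceq> r \<and> range xs \<subseteq> cm_cball le d a r"
proof -
  obtain c where c: "0 \<prec> c" using ex_positive by blast
  then obtain N where N: "\<And>n. n \<ge> N \<Longrightarrow> d (xs n) a \<prec> c"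
    using assms unfolding cm_conv_def eventually_sequentially by blast
  define r where "r = c + (\<Sum>n<N. d (xs n) a)"
  have head_nonneg: "0 \<preceq> (\<Sum>n<N. d (xs n) a)"
    by (rule sum_nonneg) (rule dist_nonneg)
  have "d (xs n) a \<preceq> r" for n
  proof (cases "n \<ge> N")
    case True
    then show ?thesis
      unfolding r_def using le_add_nonneg[OF less_imp_le[OF N] head_nonneg] by blast
  next
    case False
    then have "d (xs n) a \<preceq> (\<Sum>n<N. d (xs n) a)"
      by (intro member_le_sum) (simp_all add: dist_nonneg)
    then have "d (xs n) a \<preceq> (\<Sum>n<N. d (xs n) a) + c"
      using less_imp_le[OF c] by (rule le_add_nonneg)
    then show ?thesis unfolding r_def by (simp add: add.commute)
  qed
  moreover have "0 \<preceq> r"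
    unfolding r_def using le_add_nonneg[OF less_imp_le[OF c] head_nonneg] by blast
  ultimately show ?thesis unfolding cm_cball_def by blast
qed

end

theorem theorem9p15:
  fixes conv :: "(nat \<Rightarrow> 'y::real_vector) \<Rightarrow> 'y \<Rightarrow> bool"
    and le :: "'y \<Rightarrow> 'y \<Rightarrow> bool"
    and d :: "'x \<Rightarrow> 'x \<Rightarrow> 'y"
  assumes "solid_vector_space conv le"
    and "cone_metric le d"
  shows "(\<forall>xs a b. cm_conv conv le d xs a \<and> cm_conv conv le d xs b \<longrightarrow> a = b)
    \<and> (\<forall>xs a g. cm_conv conv le d xs a \<and> strict_mono g \<longrightarrow> cm_conv conv le d (xs \<circ> g) a)
    \<and> (\<forall>xs a. cm_conv conv le d xs a \<longrightarrow>
          (\<exists>c r. le 0 r \<and> range xs \<subseteq> cm_cball le d c r))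
    \<and> (\<forall>xs ys. finite {n. xs n \<noteq> ys n} \<longrightarrow>
          (\<forall>a. cm_conv conv le d xs a \<longleftrightarrow> cm_conv conv le d ys a))"
proof -
  interpret cone_metric_space conv le d
    using assms by unfold_locales (simp_all add: solid_vector_space_def)
  show ?thesis
  proof (intro conjI allI impI)
    show "a = b" if "cm_conv conv le d xs a \<and> cm_conv conv le d xs b" for xs a b
      using that cm_conv_unique by blast
    show "cm_conv conv le d (xs \<circ> g) a" if "cm_conv conv le d xs a \<and> strict_mono g"
      for xs a and g :: "nat \<Rightarrow> nat"
      using that by (intro cm_conv_subseq) auto
    show "\<exists>c r. le 0 r \<and> range xs \<subseteq> cm_cball le d c r" if "cm_conv conv le d xs a" for xs a
      using cm_conv_bounded[OF that] by blast
    show "cm_conv conv le d xs a \<longleftrightarrow> cm_conv conv le d ys a" if "finite {n. xs n \<noteq> ys n}"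
      for xs ys a
      using that by (rule cm_conv_finite_diff)
  qed
qed

end
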